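(* Let $G=(V,E,w)$ be an undirected graph with non-negative edge weights, $\mathcal L\subseteq V$ a set of labeled vertices and $k\ge1$. For every $v\in V$ let $\mathcal L_v$ be the set of labeled vertices in the connected component of $v$ and $\ell_v=\min\{k,|\mathcal L_v|\}$. Then (1) Algorithm 1 (described in the context) stops after a finite number of steps; (2) once it stops, for every $v\in V$ the output list is $\mathrm{kNN}[v]=[(d_G(s_1,v),s_1),\dots,(d_G(s_{\ell_v},v),s_{\ell_v})]$, where $s_1,\dots,s_{\ell_v}$ are the $\ell_v$ nearest labeled vertices to $v$, sorted by their distance to $v$.
   Context: $d_G$ is the shortest-path distance in $G$. Algorithm 1: it maintains a min-priority queue $Q$ of pairs $(\mathrm{seed},v)\in\mathcal L\times V$ with priorities, and for each $v\in V$ a list kNN$[v]$ (initially empty) and a set $S_v$ (initially empty). Initially, for each $s\in\mathcal L$, $(s,s)$ is inserted with priority $0$. While $Q$ is nonempty: pop the pair $(\mathrm{seed},v_0)$ of minimum priority $\mathrm{dist}$; add $\mathrm{seed}$ to $S_{v_0}$; if kNN$[v_0]$ has fewer than $k$ entries, append $(\mathrm{dist},\mathrm{seed})$ to kNN$[v_0]$ and, for every neighbour $v$ of $v_0$ such that kNN$[v]$ has fewer than $k$ entries and $\mathrm{seed}\notin S_v$, perform decrease-or-insert of $(\mathrm{seed},v)$ with priority $\mathrm{dist}+w(v_0,v)$ (if the pair is in $Q$ its priority is lowered to this value when smaller; otherwise it is inserted). *)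

theory Defs
  imports Complex_Main
begin

text \<open>A graph is given by a vertex set V, an edge relation E (symmetric for an
undirected graph) and a weight function w on pairs of vertices.\<close>

definition is_walk :: "'v set \<Rightarrow> ('v \<times> 'v) set \<Rightarrow> 'v list \<Rightarrow> bool" where
  "is_walk V E p \<longleftrightarrow> p \<noteq> [] \<and> set p \<subseteq> V \<and>
     (\<forall>i. Suc i < length p \<longrightarrow> (p ! i, p ! Suc i) \<in> E)"

definition walk_weight :: "('v \<Rightarrow> 'v \<Rightarrow> real) \<Rightarrow> 'v list \<Rightarrow> real" where
  "walk_weight w p = sum_list (map (\<lambda>(a, b). w a b) (zip p (tl p)))"

definition connected_in :: "'v set \<Rightarrow> ('v \<times> 'v) set \<Rightarrow> 'v \<Rightarrow> 'v \<Rightarrow> bool" where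
  "connected_in V E s v \<longleftrightarrow> (\<exists>p. is_walk V E p \<and> hd p = s \<and> last p = v)"

definition gdist :: "'v set \<Rightarrow> ('v \<times> 'v) set \<Rightarrow> ('v \<Rightarrow> 'v \<Rightarrow> real) \<Rightarrow> 'v \<Rightarrow> 'v \<Rightarrow> real" where
  "gdist V E w s v = Inf {walk_weight w p | p. is_walk V E p \<and> hd p = s \<and> last p = v}"

text \<open>State: the priority queue Q is a finite map from pairs (seed, v) to
priorities; knn v is the output list of v; S v is the set S_v.\<close>
record 'v alg_state =
  Q   :: "('v \<times> 'v) \<Rightarrow> real option"
  knn :: "'v \<Rightarrow> (real \<times> 'v) list"
  S   :: "'v \<Rightarrow> 'v set"

definition alg_init :: "'v set \<Rightarrow> 'v alg_state" where
  "alg_init L = \<lparr> Q = (\<lambda>(s, v). if s \<in> L \<and> v = s then Some 0 else None),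
                  knn = (\<lambda>_. []), S = (\<lambda>_. {}) \<rparr>"

text \<open>One iteration of the while loop: pop a pair (seed, v0) of minimum priority
dist (ties broken arbitrarily, hence a relation), add seed to S_v0, and if
kNN[v0] has fewer than k entries, append (dist, seed) and decrease-or-insert
(seed, v) with priority dist + w v0 v for every neighbour v of v0 with
|kNN[v]| < k and seed not in S_v.\<close>
definition alg_step ::
  "('v \<times> 'v) set \<Rightarrow> ('v \<Rightarrow> 'v \<Rightarrow> real) \<Rightarrow> nat \<Rightarrow> 'v alg_state \<Rightarrow> 'v alg_state \<Rightarrow> bool" where
  "alg_step E w k st st' \<longleftrightarrow>
     (\<exists>seed v0 d.
        Q st (seed, v0) = Some d \<and>
        (\<forall>x p. Q st x = Some p \<longrightarrow> d \<le> p) \<and>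
        (let Q1 = (Q st)((seed, v0) := None);
             S1 = (S st)(v0 := insert seed (S st v0))
         in if length (knn st v0) < k then
              (let knn1 = (knn st)(v0 := knn st v0 @ [(d, seed)])
               in st' = \<lparr> Q = (\<lambda>(s, v).
                              if s = seed \<and> (v0, v) \<in> E \<and> length (knn1 v) < k \<and> seed \<notin> S1 v
                              then (case Q1 (s, v) of
                                      None \<Rightarrow> Some (d + w v0 v)
                                    | Some p \<Rightarrow> Some (min p (d + w v0 v)))
                              else Q1 (s, v)),
                          knn = knn1, S = S1 \<rparr>)
            else st' = \<lparr> Q = Q1, knn = knn st, S = S1 \<rparr>))"

definition alg_stopped :: "'v alg_state \<Rightarrow> bool" where
  "alg_stopped st \<longleftrightarrow> Q st = Map.empty"

end

theory Submission
  imports Defs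
begin

text \<open>
  Termination: the popped pair (seed, v0) always has seed \<notin> S_v0, and the step inserts seed
  into S_v0, so the number of pairs (s, v) \<in> L \<times> V with s \<notin> S_v strictly decreases.

  Correctness rests on a Dijkstra-style invariant. Every priority and every list entry is the
  weight of an actual walk, and since weights are non-negative the popped priorities never
  decrease, so every list entry is at most every queued priority. Call s settled at u for the
  bound W if kNN[u] contains s with distance at most W, or kNN[u] is full with all distances at
  most W; call it covered if it is settled or (s, u) is queued with priority at most W. The
  invariant says that every labeled s is covered at itself for 0, and that an entry (d, s) of
  kNN[v] covers s at every neighbour u of v for d + w(v, u). Once the queue is empty, covered
  means settled, and induction along a walk from s shows that s is settled at its end for its
  weight; the full-list case is a pigeonhole argument on the k distinct seeds of a full list.
  Comparing with all walks gives the claimed lists.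
\<close>

lemma walk_weight_singleton [simp]: "walk_weight w [a] = 0"
  by (simp add: walk_weight_def)

lemma walk_weight_Cons_Cons [simp]:
  "walk_weight w (a # b # ys) = w a b + walk_weight w (b # ys)"
  by (simp add: walk_weight_def)

lemma is_walk_Nil [simp]: "\<not> is_walk V E []"
  by (simp add: is_walk_def)

lemma is_walk_singleton [simp]: "is_walk V E [a] \<longleftrightarrow> a \<in> V"
  by (simp add: is_walk_def)

lemma is_walk_Cons_Cons [simp]:
  "is_walk V E (a # b # ys) \<longleftrightarrow> a \<in> V \<and> (a, b) \<in> E \<and> is_walk V E (b # ys)"
  unfolding is_walk_def by (auto simp: nth_Cons' less_Suc_eq_0_disj All_less_Suc2)

lemma is_walk_snoc:
  "q \<noteq> [] \<Longrightarrow> is_walk V E (q @ [v]) \<longleftrightarrow> is_walk V E q \<and> (last q, v) \<in> E \<and> v \<in> V"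
  by (induction q rule: induct_list012) auto

lemma walk_weight_snoc:
  "q \<noteq> [] \<Longrightarrow> walk_weight w (q @ [v]) = walk_weight w q + w (last q) v"
  by (induction q rule: induct_list012) auto

lemma walk_weight_nonneg:
  "is_walk V E p \<Longrightarrow> (\<And>u v. (u, v) \<in> E \<Longrightarrow> 0 \<le> w u v) \<Longrightarrow> 0 \<le> walk_weight w p"
  by (induction p rule: induct_list012) auto

lemma gdist_le_walk_weight:
  assumes "\<And>u v. (u, v) \<in> E \<Longrightarrow> 0 \<le> w u v"
    and "is_walk V E q" "hd q = s" "last q = v"
  shows "gdist V E w s v \<le> walk_weight w q"
proof -
  have "bdd_below {walk_weight w p | p. is_walk V E p \<and> hd p = s \<and> last p = v}"
    by (rule bdd_belowI[of _ 0]) (auto intro: walk_weight_nonneg assms(1))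
  then show ?thesis
    unfolding gdist_def by (rule cInf_lower[rotated]) (use assms(2-4) in blast)
qed

lemma gdist_greatest:
  assumes "\<And>q. is_walk V E q \<Longrightarrow> hd q = s \<Longrightarrow> last q = v \<Longrightarrow> c \<le> walk_weight w q"
    and "connected_in V E s v"
  shows "c \<le> gdist V E w s v"
  unfolding gdist_def
  by (rule cInf_greatest) (use assms in \<open>auto simp: connected_in_def\<close>)

lemma list_full_and_bounded_if_covers:
  fixes xs ys :: "('a::linorder \<times> 'b) list"
  assumes "distinct (map snd xs)" "k \<le> length xs" "length ys \<le> k"
    and covers: "\<And>s. s \<in> snd ` set xs \<Longrightarrow> \<exists>d. (d, s) \<in> set ys \<and> d \<le> W"
  shows "k \<le> length ys \<and> (\<forall>e\<in>set ys. fst e \<le> W)"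
proof -
  define A where "A = {e \<in> set ys. fst e \<le> W}"
  have covered_seeds: "snd ` set xs \<subseteq> snd ` A"
    using covers unfolding A_def by (force intro: image_eqI[where f = snd])
  have "length xs = card (snd ` set xs)"
    using distinct_card[OF assms(1)] by simp
  also have "\<dots> \<le> card (snd ` A)"
    by (rule card_mono[OF _ covered_seeds]) (simp add: A_def)
  also have "\<dots> \<le> card A"
    unfolding A_def by (rule card_image_le) simp
  finally have "k \<le> card A"
    using assms(2) by simp
  moreover have "card A \<le> card (set ys)"
    unfolding A_def by (rule card_mono) auto
  moreover note card_length[of ys]
  ultimately have "card A = card (set ys)" "k \<le> length ys"
    using assms(3) by linarith+
  moreover have "A = set ys"
    using calculation(1) by (intro card_subset_eq) (auto simp: A_def)
  ultimately show ?thesis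
    unfolding A_def by blast
qed

lemma alg_step_cases:
  assumes "alg_step E w k st st'"
  obtains (append) seed v0 d where "Q st (seed, v0) = Some d" "\<forall>x p. Q st x = Some p \<longrightarrow> d \<le> p"
    "S st' = (S st)(v0 := insert seed (S st v0))"
    "length (knn st v0) < k" "knn st' = (knn st)(v0 := knn st v0 @ [(d, seed)])"
    "Q st' = (\<lambda>(s, v). if s = seed \<and> (v0, v) \<in> E \<and> length (knn st' v) < k \<and> seed \<notin> S st' v
        then (case ((Q st)((seed, v0) := None)) (s, v) of
                None \<Rightarrow> Some (d + w v0 v)
              | Some p \<Rightarrow> Some (min p (d + w v0 v)))
        else ((Q st)((seed, v0) := None)) (s, v))"
  | (full) seed v0 d where "Q st (seed, v0) = Some d" "\<forall>x p. Q st x = Some p \<longrightarrow> d \<le> p"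
    "S st' = (S st)(v0 := insert seed (S st v0))"
    "\<not> length (knn st v0) < k" "knn st' = knn st" "Q st' = (Q st)((seed, v0) := None)"
  using assms unfolding alg_step_def Let_def
  by (elim exE conjE) (auto split: if_splits intro: that)

lemma alg_step_exists:
  assumes "Q st (seed, v0) = Some d" "\<forall>x p. Q st x = Some p \<longrightarrow> d \<le> p"
  shows "\<exists>st'. alg_step E w k st st'"
  using assms unfolding alg_step_def Let_def by (cases "length (knn st v0) < k") auto

locale knn_graph =
  fixes V :: "'v set" and E :: "('v \<times> 'v) set" and w :: "'v \<Rightarrow> 'v \<Rightarrow> real"
    and L :: "'v set" and k :: nat
  assumes finite_V: "finite V" and E_subset: "E \<subseteq> V \<times> V"
    and w_nonneg: "\<And>u v. (u, v) \<in> E \<Longrightarrow> 0 \<le> w u v"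
    and L_subset: "L \<subseteq> V"
begin

definition reachable_within :: "'v \<Rightarrow> 'v \<Rightarrow> real \<Rightarrow> bool" where
  "reachable_within s v p \<longleftrightarrow>
     (\<exists>q. is_walk V E q \<and> hd q = s \<and> last q = v \<and> walk_weight w q \<le> p)"

lemma reachable_within_refl: "s \<in> V \<Longrightarrow> reachable_within s s 0"
  unfolding reachable_within_def by (intro exI[of _ "[s]"]) auto

lemma reachable_within_edge:
  assumes "reachable_within s u p" "(u, v) \<in> E"
  shows "reachable_within s v (p + w u v)"
proof -
  obtain q where q: "is_walk V E q" "hd q = s" "last q = u" "walk_weight w q \<le> p"
    using assms(1) unfolding reachable_within_def by blast
  have "q \<noteq> []"
    using q(1) by auto
  moreover have "v \<in> V"
    using assms(2) E_subset by auto
  ultimately show ?thesis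
    unfolding reachable_within_def using q assms(2)
    by (intro exI[of _ "q @ [v]"]) (simp add: is_walk_snoc walk_weight_snoc)
qed

lemma gdist_le_reachable_within:
  assumes "reachable_within s v p"
  shows "gdist V E w s v \<le> p"
proof -
  obtain q where q: "is_walk V E q" "hd q = s" "last q = v" "walk_weight w q \<le> p"
    using assms unfolding reachable_within_def by blast
  have "gdist V E w s v \<le> walk_weight w q"
    by (rule gdist_le_walk_weight) (use w_nonneg q in auto)
  then show ?thesis
    using q(4) by linarith
qed

lemma connected_if_reachable_within: "reachable_within s v p \<Longrightarrow> connected_in V E s v"
  unfolding reachable_within_def connected_in_def by blast

definition settled :: "'v alg_state \<Rightarrow> 'v \<Rightarrow> 'v \<Rightarrow> real \<Rightarrow> bool" where
  "settled st s u W \<longleftrightarrow> (\<exists>d. (d, s) \<in> set (knn st u) \<and> d \<le> W)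
      \<or> (k \<le> length (knn st u) \<and> (\<forall>e\<in>set (knn st u). fst e \<le> W))"

definition covered :: "'v alg_state \<Rightarrow> 'v \<Rightarrow> 'v \<Rightarrow> real \<Rightarrow> bool" where
  "covered st s u W \<longleftrightarrow> settled st s u W \<or> (\<exists>p. Q st (s, u) = Some p \<and> p \<le> W)"

lemma settled_mono: "settled st s u W \<Longrightarrow> W \<le> W' \<Longrightarrow> settled st s u W'"
  unfolding settled_def by force

definition alg_invar :: "'v alg_state \<Rightarrow> bool" where
  "alg_invar st \<longleftrightarrow>
    (\<forall>s v p. Q st (s, v) = Some p \<longrightarrow> s \<in> L \<and> v \<in> V \<and> s \<notin> S st v \<and> reachable_within s v p) \<and>
    (\<forall>v e. e \<in> set (knn st v) \<longrightarrow>
       snd e \<in> L \<and> reachable_within (snd e) v (fst e) \<and> snd e \<in> S st v) \<and>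
    (\<forall>v. distinct (map snd (knn st v)) \<and> sorted (map fst (knn st v)) \<and> length (knn st v) \<le> k) \<and>
    (\<forall>v s. s \<in> S st v \<longrightarrow> s \<in> snd ` set (knn st v) \<or> k \<le> length (knn st v)) \<and>
    (\<forall>v e x p. e \<in> set (knn st v) \<longrightarrow> Q st x = Some p \<longrightarrow> fst e \<le> p) \<and>
    (\<forall>s\<in>L. covered st s s 0) \<and>
    (\<forall>v e u. e \<in> set (knn st v) \<longrightarrow> (v, u) \<in> E \<longrightarrow> covered st (snd e) u (fst e + w v u))"

context
  fixes st :: "'v alg_state"
  assumes inv: "alg_invar st"
begin

lemma queued_sound:
  "Q st (s, v) = Some p \<Longrightarrow> s \<in> L \<and> v \<in> V \<and> s \<notin> S st v \<and> reachable_within s v p"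
  using inv unfolding alg_invar_def by blast

lemma knn_sound:
  "e \<in> set (knn st v) \<Longrightarrow> snd e \<in> L \<and> reachable_within (snd e) v (fst e) \<and> snd e \<in> S st v"
  using inv unfolding alg_invar_def by blast

lemma knn_wf:
  "distinct (map snd (knn st v)) \<and> sorted (map fst (knn st v)) \<and> length (knn st v) \<le> k"
  using inv unfolding alg_invar_def by blast

lemma visited_listed_or_full:
  "s \<in> S st v \<Longrightarrow> s \<in> snd ` set (knn st v) \<or> k \<le> length (knn st v)"
  using inv unfolding alg_invar_def by blast

lemma knn_le_queued: "e \<in> set (knn st v) \<Longrightarrow> Q st x = Some p \<Longrightarrow> fst e \<le> p"
  using inv unfolding alg_invar_def by blast

lemma visited_settled:
  "s \<in> S st u \<Longrightarrow> \<forall>e\<in>set (knn st u). fst e \<le> W \<Longrightarrow> settled st s u W"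
  using visited_listed_or_full[of s u] unfolding settled_def by force

lemma seed_covered: "s \<in> L \<Longrightarrow> covered st s s 0"
  using inv unfolding alg_invar_def by blast

lemma edge_covered:
  "e \<in> set (knn st v) \<Longrightarrow> (v, u) \<in> E \<Longrightarrow> covered st (snd e) u (fst e + w v u)"
  using inv unfolding alg_invar_def by blast

end

lemma alg_invar_init: "alg_invar (alg_init L)"
  unfolding alg_invar_def covered_def alg_init_def using L_subset
  by (auto intro: reachable_within_refl)

context
  fixes st st' :: "'v alg_state" and seed v0 :: 'v and d :: real
  assumes inv: "alg_invar st"
    and popped: "Q st (seed, v0) = Some d"
    and popped_min: "\<forall>x p. Q st x = Some p \<longrightarrow> d \<le> p"
    and S_upd: "S st' = (S st)(v0 := insert seed (S st v0))"
    and not_full: "length (knn st v0) < k"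
    and knn_upd: "knn st' = (knn st)(v0 := knn st v0 @ [(d, seed)])"
    and Q_upd: "Q st' = (\<lambda>(s, v). if s = seed \<and> (v0, v) \<in> E \<and> length (knn st' v) < k \<and> seed \<notin> S st' v
        then (case ((Q st)((seed, v0) := None)) (s, v) of
                None \<Rightarrow> Some (d + w v0 v)
              | Some p \<Rightarrow> Some (min p (d + w v0 v)))
        else ((Q st)((seed, v0) := None)) (s, v))"
begin

lemma append_queue_entry:
  assumes "Q st' (s, v) = Some p'"
  shows "((s, v) \<noteq> (seed, v0) \<and> Q st (s, v) = Some p')
    \<or> (s = seed \<and> (v0, v) \<in> E \<and> seed \<notin> S st' v \<and>
       (p' = d + w v0 v \<or> (\<exists>p. Q st (s, v) = Some p \<and> p' = min p (d + w v0 v))))"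
  using assms Q_upd by (auto split: if_splits option.splits)

lemma append_queue_decreases:
  "Q st (s, v) = Some p \<Longrightarrow> (s, v) \<noteq> (seed, v0) \<Longrightarrow> \<exists>p'. Q st' (s, v) = Some p' \<and> p' \<le> p"
  using Q_upd by (auto split: if_splits option.splits)

lemma append_queue_neighbour:
  "(v0, u) \<in> E \<Longrightarrow> length (knn st' u) < k \<Longrightarrow> seed \<notin> S st' u \<Longrightarrow>
     \<exists>p'. Q st' (seed, u) = Some p' \<and> p' \<le> d + w v0 u"
  using Q_upd by (auto split: if_splits option.splits)

lemma append_covered_mono:
  assumes "covered st s u W"
  shows "covered st' s u W"
proof -
  have settled_kept: "settled st' s u W" if "settled st s u W"
    using that not_full knn_wf[OF inv, of v0] unfolding settled_def knn_upd by auto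
  from assms[unfolded covered_def] show ?thesis
  proof (elim disjE exE conjE)
    fix p assume p: "Q st (s, u) = Some p" "p \<le> W"
    show ?thesis
    proof (cases "(s, u) = (seed, v0)")
      case True
      then show ?thesis
        using p popped unfolding covered_def settled_def knn_upd by auto
    next
      case False
      then show ?thesis
        using append_queue_decreases[OF p(1) False] p(2) unfolding covered_def by force
    qed
  qed (use settled_kept covered_def in blast)
qed

lemma append_knn_le_popped: "e \<in> set (knn st' v) \<Longrightarrow> fst e \<le> d"
  using knn_le_queued[OF inv _ popped, of e] unfolding knn_upd by (auto split: if_splits)

lemma append_covers_neighbour:
  assumes edge: "(v0, u) \<in> E"
  shows "covered st' seed u (d + w v0 u)"
proof -
  have w_pos: "0 \<le> w v0 u"
    using w_nonneg edge .
  have bounded: "\<forall>e\<in>set (knn st' u). fst e \<le> d + w v0 u"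
    using append_knn_le_popped w_pos by force
  consider (queued) "length (knn st' u) < k" "seed \<notin> S st' u" | (full) "k \<le> length (knn st' u)"
    | (visited) "seed \<in> S st' u" by linarith
  then show ?thesis
  proof cases
    case queued
    then show ?thesis
      using append_queue_neighbour[OF edge] unfolding covered_def by blast
  next
    case full
    then show ?thesis
      using bounded unfolding covered_def settled_def by blast
  next
    case visited
    show ?thesis
    proof (cases "u = v0")
      case True
      then show ?thesis
        using w_pos unfolding covered_def settled_def knn_upd by auto
    next
      case False
      then have "settled st seed u (d + w v0 u)"
        using visited bounded by (intro visited_settled[OF inv]) (simp_all add: S_upd knn_upd)
      then show ?thesis
        using False unfolding covered_def settled_def knn_upd by simp
    qed
  qed
qed

lemma append_queued_sound:
  assumes queued: "Q st' (s, v) = Some p"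
  shows "s \<in> L \<and> v \<in> V \<and> s \<notin> S st' v \<and> reachable_within s v p"
proof (cases "(s, v) \<noteq> (seed, v0) \<and> Q st (s, v) = Some p")
  case True
  then show ?thesis
    using queued_sound[OF inv, of s v p] S_upd by auto
next
  case False
  then have new: "s = seed" "(v0, v) \<in> E" "seed \<notin> S st' v"
    and p: "p = d + w v0 v \<or> (\<exists>p'. Q st (s, v) = Some p' \<and> p = min p' (d + w v0 v))"
    using append_queue_entry[OF queued] by blast+
  have via_v0: "reachable_within seed v (d + w v0 v)"
    using reachable_within_edge queued_sound[OF inv popped] new(2) by blast
  have "reachable_within s v p"
    using p
  proof (elim disjE exE conjE)
    fix p' assume "Q st (s, v) = Some p'" "p = min p' (d + w v0 v)"
    then show ?thesis
      using via_v0 queued_sound[OF inv, of s v p'] new(1) by (auto simp: min_def)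
  qed (use via_v0 new in simp)
  then show ?thesis
    using new queued_sound[OF inv popped] E_subset by auto
qed

lemma append_knn_sound:
  "e \<in> set (knn st' v) \<Longrightarrow> snd e \<in> L \<and> reachable_within (snd e) v (fst e) \<and> snd e \<in> S st' v"
  using knn_sound[OF inv, of e v] queued_sound[OF inv popped]
  unfolding knn_upd S_upd by (auto split: if_splits)

lemma append_knn_wf:
  "distinct (map snd (knn st' v)) \<and> sorted (map fst (knn st' v)) \<and> length (knn st' v) \<le> k"
proof -
  have "seed \<notin> snd ` set (knn st v0)"
    using knn_sound[OF inv, of _ v0] queued_sound[OF inv popped] by force
  moreover have "\<forall>e\<in>set (knn st v0). fst e \<le> d"
    using knn_le_queued[OF inv _ popped] by blast
  ultimately show ?thesis
    using knn_wf[OF inv, of v] not_full unfolding knn_upd by (auto simp: sorted_append)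
qed

lemma append_knn_le_queued:
  assumes e: "e \<in> set (knn st' v)" and queued: "Q st' x = Some p"
  shows "fst e \<le> p"
proof -
  obtain s u where x: "x = (s, u)"
    by force
  have "d \<le> p"
    using append_queue_entry[OF queued[unfolded x]] popped_min w_nonneg by force
  then show ?thesis
    using append_knn_le_popped[OF e] by simp
qed

lemma append_edge_covered:
  assumes e: "e \<in> set (knn st' v)" and edge: "(v, u) \<in> E"
  shows "covered st' (snd e) u (fst e + w v u)"
proof (cases "e \<in> set (knn st v)")
  case True
  then show ?thesis
    using edge_covered[OF inv _ edge] append_covered_mono by blast
next
  case False
  then have "v = v0" "e = (d, seed)"
    using e unfolding knn_upd by (auto split: if_splits)
  then show ?thesis
    using append_covers_neighbour edge by simp
qed

lemma alg_invar_append: "alg_invar st'"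
  unfolding alg_invar_def
proof (intro conjI; intro allI impI ballI)
  fix s v p assume "Q st' (s, v) = Some p"
  then show "s \<in> L \<and> v \<in> V \<and> s \<notin> S st' v \<and> reachable_within s v p"
    by (rule append_queued_sound)
next
  fix v e assume "e \<in> set (knn st' v)"
  then show "snd e \<in> L \<and> reachable_within (snd e) v (fst e) \<and> snd e \<in> S st' v"
    by (rule append_knn_sound)
next
  fix v
  show "distinct (map snd (knn st' v)) \<and> sorted (map fst (knn st' v)) \<and> length (knn st' v) \<le> k"
    by (rule append_knn_wf)
next
  fix v s assume "s \<in> S st' v"
  then show "s \<in> snd ` set (knn st' v) \<or> k \<le> length (knn st' v)"
    using visited_listed_or_full[OF inv, of s v] unfolding S_upd knn_upd by (force split: if_splits)
next
  fix v e x p assume "e \<in> set (knn st' v)" "Q st' x = Some p"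
  then show "fst e \<le> p"
    by (rule append_knn_le_queued)
next
  fix s assume "s \<in> L"
  then show "covered st' s s 0"
    using seed_covered[OF inv] append_covered_mono by blast
next
  fix v e u assume "e \<in> set (knn st' v)" "(v, u) \<in> E"
  then show "covered st' (snd e) u (fst e + w v u)"
    by (rule append_edge_covered)
qed

end

lemma alg_invar_pop_full:
  assumes inv: "alg_invar st"
    and popped: "Q st (seed, v0) = Some d"
    and S_upd: "S st' = (S st)(v0 := insert seed (S st v0))"
    and full: "\<not> length (knn st v0) < k"
    and knn_upd: "knn st' = knn st"
    and Q_upd: "Q st' = (Q st)((seed, v0) := None)"
  shows "alg_invar st'"
proof -
  have covered_mono: "covered st' s u W" if "covered st s u W" for s u W
    using that full knn_le_queued[OF inv _ popped] popped
    unfolding covered_def settled_def knn_upd Q_upd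
    by (cases "(s, u) = (seed, v0)") force+
  show ?thesis
    unfolding alg_invar_def
  proof (intro conjI; intro allI impI ballI)
    fix v s assume "s \<in> S st' v"
    then show "s \<in> snd ` set (knn st' v) \<or> k \<le> length (knn st' v)"
      using visited_listed_or_full[OF inv, of s v] full unfolding S_upd knn_upd
      by (auto split: if_splits)
  next
    fix s assume "s \<in> L"
    then show "covered st' s s 0"
      using seed_covered[OF inv] covered_mono by blast
  next
    fix v e u assume "e \<in> set (knn st' v)" "(v, u) \<in> E"
    then show "covered st' (snd e) u (fst e + w v u)"
      using edge_covered[OF inv] covered_mono unfolding knn_upd by blast
  qed (use queued_sound[OF inv] knn_sound[OF inv] knn_wf[OF inv] knn_le_queued[OF inv] in
    \<open>auto simp: knn_upd S_upd Q_upd split: if_splits\<close>)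
qed

lemma alg_invar_step:
  assumes "alg_invar st" "alg_step E w k st st'"
  shows "alg_invar st'"
  using assms(2)
proof (cases rule: alg_step_cases)
  case append
  then show ?thesis
    by (rule alg_invar_append[OF assms(1)])
next
  case full
  from full(1,3-6) show ?thesis
    by (rule alg_invar_pop_full[OF assms(1)])
qed

lemma alg_invar_reachable: "(alg_step E w k)\<^sup>*\<^sup>* (alg_init L) st \<Longrightarrow> alg_invar st"
  by (induction rule: rtranclp_induct) (auto intro: alg_invar_init alg_invar_step)

definition unvisited :: "'v alg_state \<Rightarrow> nat" where
  "unvisited st = card {(s, v). s \<in> L \<and> v \<in> V \<and> s \<notin> S st v}"

lemma unvisited_step_less:
  assumes inv: "alg_invar st" and step: "alg_step E w k st st'"
  shows "unvisited st' < unvisited st"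
proof -
  obtain seed v0 d where popped: "Q st (seed, v0) = Some d"
    and S_upd: "S st' = (S st)(v0 := insert seed (S st v0))"
    using step by (cases rule: alg_step_cases) blast+
  have "seed \<in> L" "v0 \<in> V" "seed \<notin> S st v0"
    using queued_sound[OF inv popped] by blast+
  then have "{(s, v). s \<in> L \<and> v \<in> V \<and> s \<notin> S st' v} \<subset> {(s, v). s \<in> L \<and> v \<in> V \<and> s \<notin> S st v}"
    using S_upd by auto
  moreover have "finite {(s, v). s \<in> L \<and> v \<in> V \<and> s \<notin> S st v}"
    by (rule finite_subset[of _ "L \<times> V"]) (use finite_V L_subset finite_subset in auto)
  ultimately show ?thesis
    unfolding unvisited_def by (rule psubset_card_mono[rotated])
qed

lemma alg_terminates: "\<nexists>f. f 0 = alg_init L \<and> (\<forall>i. alg_step E w k (f i) (f (Suc i)))"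
proof
  assume "\<exists>f. f 0 = alg_init L \<and> (\<forall>i. alg_step E w k (f i) (f (Suc i)))"
  then obtain f where f0: "f 0 = alg_init L" and steps: "\<And>i. alg_step E w k (f i) (f (Suc i))"
    by blast
  have reachable: "(alg_step E w k)\<^sup>*\<^sup>* (alg_init L) (f i)" for i
    by (induction i) (simp add: f0, metis rtranclp.rtrancl_into_rtrancl steps)
  have "unvisited (f i) + i \<le> unvisited (f 0)" for i
  proof (induction i)
    case (Suc i)
    then show ?case
      using unvisited_step_less[OF alg_invar_reachable[OF reachable] steps, of i] by simp
  qed simp
  from this[of "Suc (unvisited (f 0))"] show False
    by simp
qed

lemma stopped_if_no_step:
  assumes inv: "alg_invar st" and no_step: "\<not> (\<exists>st'. alg_step E w k st st')"
  shows "alg_stopped st"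
proof (rule ccontr)
  assume "\<not> alg_stopped st"
  then obtain x p where "Q st x = Some p"
    unfolding alg_stopped_def by fastforce
  then have nonempty: "ran (Q st) \<noteq> {}"
    by (auto intro: ranI)
  have "dom (Q st) \<subseteq> L \<times> V"
    using queued_sound[OF inv] by auto
  moreover have "finite (L \<times> V)"
    using finite_V L_subset by (simp add: finite_subset)
  ultimately have finite_ran: "finite (ran (Q st))"
    by (meson finite_ran finite_subset)
  obtain seed v0 where popped: "Q st (seed, v0) = Some (Min (ran (Q st)))"
    using Min_in[OF finite_ran nonempty] unfolding ran_def by auto
  have "\<forall>x p. Q st x = Some p \<longrightarrow> Min (ran (Q st)) \<le> p"
    using finite_ran by (simp add: ranI)
  then show False
    using alg_step_exists[OF popped] no_step by blast
qed

context
  fixes st :: "'v alg_state"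
  assumes inv: "alg_invar st" and empty: "Q st = Map.empty"
begin

lemma settled_if_covered: "covered st s u W \<Longrightarrow> settled st s u W"
  using empty by (simp add: covered_def)

lemma settled_across_edge:
  "e \<in> set (knn st u) \<Longrightarrow> (u, v) \<in> E \<Longrightarrow> fst e \<le> W \<Longrightarrow> settled st (snd e) v (W + w u v)"
  using settled_mono[OF settled_if_covered[OF edge_covered[OF inv]]] by simp

lemma settled_across_edge_if_full:
  assumes edge: "(u, v) \<in> E" and full: "k \<le> length (knn st u)"
    and bounded: "\<forall>e\<in>set (knn st u). fst e \<le> W"
  shows "settled st s v (W + w u v)"
proof (cases "k \<le> length (knn st v) \<and> (\<forall>e\<in>set (knn st v). fst e \<le> W + w u v)")
  case False
  have "\<exists>d. (d, s') \<in> set (knn st v) \<and> d \<le> W + w u v" if "s' \<in> snd ` set (knn st u)" for s'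
    using that settled_across_edge[OF _ edge] bounded False unfolding settled_def by fastforce
  then have "k \<le> length (knn st v) \<and> (\<forall>e\<in>set (knn st v). fst e \<le> W + w u v)"
    using list_full_and_bounded_if_covers knn_wf[OF inv] full by blast
  with False show ?thesis
    by blast
qed (simp add: settled_def)

lemma settled_along_walk:
  "is_walk V E q \<Longrightarrow> hd q \<in> L \<Longrightarrow> settled st (hd q) (last q) (walk_weight w q)"
proof (induction q rule: rev_induct)
  case (snoc v q)
  show ?case
  proof (cases "q = []")
    case True
    then show ?thesis
      using snoc.prems seed_covered[OF inv] settled_if_covered by simp
  next
    case False
    have edge: "(last q, v) \<in> E" and IH: "settled st (hd q) (last q) (walk_weight w q)"
      using snoc False is_walk_snoc[OF False] by auto
    have "settled st (hd q) v (walk_weight w q + w (last q) v)"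
      using IH unfolding settled_def[of st "hd q" "last q"]
    proof (elim disjE exE conjE)
      fix d assume "(d, hd q) \<in> set (knn st (last q))" "d \<le> walk_weight w q"
      then show ?thesis
        using settled_across_edge[of "(d, hd q)" "last q" v "walk_weight w q"] edge by simp
    qed (rule settled_across_edge_if_full[OF edge])
    then show ?thesis
      using False by (simp add: walk_weight_snoc)
  qed
qed simp

lemma knn_entry_eq_gdist:
  assumes e: "e \<in> set (knn st v)"
  shows "fst e = gdist V E w (snd e) v"
proof (rule antisym)
  have sound: "snd e \<in> L" "reachable_within (snd e) v (fst e)"
    using knn_sound[OF inv e] by auto
  then show "gdist V E w (snd e) v \<le> fst e"
    by (simp add: gdist_le_reachable_within)
  show "fst e \<le> gdist V E w (snd e) v"
  proof (rule gdist_greatest)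
    show "connected_in V E (snd e) v"
      using sound(2) by (rule connected_if_reachable_within)
    fix q assume q: "is_walk V E q" "hd q = snd e" "last q = v"
    then have "settled st (snd e) v (walk_weight w q)"
      using settled_along_walk[OF q(1)] sound(1) by simp
    then show "fst e \<le> walk_weight w q"
      unfolding settled_def
    proof (elim disjE exE conjE)
      fix d assume d: "(d, snd e) \<in> set (knn st v)" "d \<le> walk_weight w q"
      have "(d, snd e) = e"
        using knn_wf[OF inv, of v] d(1) e by (metis distinct_map inj_onD snd_conv)
      then have "fst e = d"
        by (metis fst_conv)
      then show ?thesis
        using d(2) by simp
    qed (use e in auto)
  qed
qed

lemma knn_full_if_omitted:
  assumes "s \<in> L" "connected_in V E s v" "s \<notin> snd ` set (knn st v)"
  shows "k \<le> length (knn st v) \<and> (\<forall>e\<in>set (knn st v). fst e \<le> gdist V E w s v)"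
proof -
  have full: "k \<le> length (knn st v) \<and> (\<forall>e\<in>set (knn st v). fst e \<le> walk_weight w q)"
    if "is_walk V E q" "hd q = s" "last q = v" for q
    using settled_along_walk[OF that(1)] that assms(1,3) unfolding settled_def by force
  obtain q where "is_walk V E q" "hd q = s" "last q = v"
    using assms(2) unfolding connected_in_def by blast
  then show ?thesis
    using full gdist_greatest[OF _ assms(2)] by blast
qed

lemma knn_at_stop:
  assumes "v \<in> V"
  shows "let Lv = {s \<in> L. connected_in V E s v} in
    \<exists>ss. knn st v = map (\<lambda>s. (gdist V E w s v, s)) ss
      \<and> distinct ss \<and> set ss \<subseteq> Lv
      \<and> length ss = min k (card Lv)
      \<and> sorted (map (\<lambda>s. gdist V E w s v) ss)
      \<and> (\<forall>s\<in>Lv - set ss. \<forall>s'\<in>set ss. gdist V E w s' v \<le> gdist V E w s v)"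
proof -
  define Lv where "Lv = {s \<in> L. connected_in V E s v}"
  define ss where "ss = map snd (knn st v)"
  have wf: "distinct ss" "sorted (map fst (knn st v))" "length ss \<le> k"
    using knn_wf[OF inv, of v] unfolding ss_def by auto
  have dist_eq: "map (\<lambda>s. gdist V E w s v) ss = map fst (knn st v)"
    unfolding ss_def map_map by (rule map_cong) (simp_all add: knn_entry_eq_gdist)
  have knn_eq: "knn st v = map (\<lambda>s. (gdist V E w s v, s)) ss"
    unfolding ss_def map_map by (rule sym, rule map_idI) (simp add: knn_entry_eq_gdist prod_eq_iff)
  have ss_sub: "set ss \<subseteq> Lv"
    unfolding ss_def Lv_def using knn_sound[OF inv] connected_if_reachable_within by fastforce
  have omitted: "k \<le> length ss \<and> (\<forall>s'\<in>set ss. gdist V E w s' v \<le> gdist V E w s v)"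
    if "s \<in> Lv - set ss" for s
    using knn_full_if_omitted[of s] that knn_entry_eq_gdist unfolding Lv_def ss_def by auto
  have "finite Lv"
    unfolding Lv_def by (rule finite_subset[of _ V]) (use L_subset finite_V in auto)
  then have "length ss = min k (card Lv)"
    using omitted ss_sub wf(3) card_mono[of Lv "set ss"] distinct_card[OF wf(1)]
    by (cases "Lv \<subseteq> set ss") (auto intro: antisym)
  moreover have "sorted (map (\<lambda>s. gdist V E w s v) ss)"
    using dist_eq wf(2) by simp
  ultimately show ?thesis
    unfolding Let_def Lv_def[symmetric]
    using knn_eq wf(1) ss_sub omitted by blast
qed

end

end

theorem theoremB1:
  fixes V :: "'v set" and E :: "('v \<times> 'v) set" and w :: "'v \<Rightarrow> 'v \<Rightarrow> real"
    and L :: "'v set" and k :: nat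
  assumes finV: "finite V"
    and E_sub: "E \<subseteq> V \<times> V"
    and E_sym: "sym E"
    and w_sym: "\<And>u v. (u, v) \<in> E \<Longrightarrow> w u v = w v u"
    and w_nonneg: "\<And>u v. (u, v) \<in> E \<Longrightarrow> 0 \<le> w u v"
    and L_sub: "L \<subseteq> V"
    and k_pos: "k \<ge> 1"
  shows
    "(\<nexists>f. f 0 = alg_init L \<and> (\<forall>i. alg_step E w k (f i) (f (Suc i))))
     \<and> (\<forall>st. (alg_step E w k)\<^sup>*\<^sup>* (alg_init L) st \<and> \<not> (\<exists>st'. alg_step E w k st st')
            \<longrightarrow> alg_stopped st)
     \<and> (\<forall>st. (alg_step E w k)\<^sup>*\<^sup>* (alg_init L) st \<and> alg_stopped st \<longrightarrow>
          (\<forall>v\<in>V. let Lv = {s \<in> L. connected_in V E s v} in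
             \<exists>ss. knn st v = map (\<lambda>s. (gdist V E w s v, s)) ss
                  \<and> distinct ss \<and> set ss \<subseteq> Lv
                  \<and> length ss = min k (card Lv)
                  \<and> sorted (map (\<lambda>s. gdist V E w s v) ss)
                  \<and> (\<forall>s\<in>Lv - set ss. \<forall>s'\<in>set ss. gdist V E w s' v \<le> gdist V E w s v)))"
proof -
  interpret knn_graph V E w L k
    using finV E_sub w_nonneg L_sub by unfold_locales
  show ?thesis
    using alg_terminates stopped_if_no_step knn_at_stop alg_invar_reachable
    unfolding alg_stopped_def by blast
qed

end
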